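(* Let $X$ be an integral regular projective curve of genus $g$ over $\mathbb{F}_q$ and let $\mathbf{n}_m=(n_0,n_1,\dots,n_m)$ ($m\ge 0$) be a tuple of positive integers. Then the $\mathbf{n}_m$-derived zeta function $\widehat\zeta^{(\mathbf{n}_m)}_X(s)$ is a rational function of $T_{\mathbf{n}_m}=q^{-n_0n_1\cdots n_m s}$; i.e. the $\mathbf{n}_m$-derived Zeta function $\widehat Z^{(\mathbf{n}_m)}_X(T_{\mathbf{n}_m})$ is a rational function of $T_{\mathbf{n}_m}$.
   Context: Let $\zeta_X(s)=\sum_{D\ge 0}N(D)^{-s}$ be the Artin zeta function of $X$ ($D$ running over effective divisors) and $\widehat\zeta_X(s)=q^{s(g-1)}\zeta_X(s)$ the complete Artin zeta function, a rational function of $q^{-s}$. Derived zeta functions are defined recursively. For the empty tuple $\mathbf{n}_{-1}=()$ put $q_{\mathbf{n}_{-1}}=q$, $T_{\mathbf{n}_{-1}}=q^{-s}$, $\widehat\zeta^{(\mathbf{n}_{-1})}_X=\widehat\zeta_X$. For a tuple $\mathbf{n}_m=(n_0,\dots,n_m)$ of positive integers ($m\ge 0$) put $\mathbf{n}_{m-1}=(n_0,\dots,n_{m-1})$, $q_{\mathbf{n}_m}=q^{n_0n_1\cdots n_m}$, $T_{\mathbf{n}_m}=q^{-n_0n_1\cdots n_m s}$. Writing $\widehat Z^{(\mathbf{n}_{m-1})}_X(T_{\mathbf{n}_{m-1}}):=\widehat\zeta^{(\mathbf{n}_{m-1})}_X(s)$ (a rational function of $T_{\mathbf{n}_{m-1}}$),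 set $\widehat\zeta^{(\mathbf{n}_{m-1})}_X(1):=\operatorname{Res}_{T_{\mathbf{n}_{m-1}}=1}\widehat Z^{(\mathbf{n}_{m-1})}_X(T_{\mathbf{n}_{m-1}})$ and for integers $N\ge 1$, $\widehat v_N:=\prod_{k=1}^{N}\widehat\zeta^{(\mathbf{n}_{m-1})}_X(k)$. Then $$\widehat\zeta^{(\mathbf{n}_m)}_X(s)=q_{\mathbf{n}_{m-1}}^{\binom{n_m}{2}(g-1)}\sum_{a=1}^{n_m}\Biggl(\sum_{\substack{k_1,\dots,k_p>0\\k_1+\cdots+k_p=n_m-a}}\frac{\widehat v_{k_1}\cdots\widehat v_{k_p}}{\prod_{j=1}^{p-1}(1-q_{\mathbf{n}_{m-1}}^{k_j+k_{j+1}})}\cdot\frac{1}{1-q_{\mathbf{n}_{m-1}}^{n_ms-n_m+a+k_p}}\Biggr)\widehat\zeta^{(\mathbf{n}_{m-1})}_X(n_ms-n_m+a)\Biggl(\sum_{\substack{l_1,\dots,l_r>0\\l_1+\cdots+l_r=a-1}}\frac{1}{1-q_{\mathbf{n}_{m-1}}^{-n_ms+n_m-a+1+l_1}}\cdot\frac{\widehat v_{l_1}\cdots\widehat v_{l_r}}{\prod_{j=1}^{r-1}(1-q_{\mathbf{n}_{m-1}}^{l_j+l_{j+1}})}\Biggr),$$ where the inner sums run over ordered tuples of positive integers (of any length) with the indicated sum, and an inner sum over tuples summing to $0$ is defined to be $1$. One writes $\widehat Z^{(\mathbf{n}_m)}_X(T_{\mathbf{n}_m}):=\widehat\zeta^{(\mathbf{n}_m)}_X(s)$.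 (For $m=0$ this is the $\mathrm{SL}_{n_0}$-zeta function of $X$, which coincides with the rank $n_0$ non-abelian zeta function of $X$.) *)

theory Defs
  imports "HOL-Complex_Analysis.Complex_Analysis" "HOL-Computational_Algebra.Polynomial"
begin

text \<open>Abstract zeta data of an integral regular projective curve X of genus g over F_q
  (Weil): Z_X(T) = P(T) / ((1 - T)(1 - q T)) with P an integer polynomial of degree 2g,
  P(0) = 1, satisfying the functional equation and the Riemann hypothesis.\<close>

definition curve_zeta_data :: "nat \<Rightarrow> nat \<Rightarrow> int poly \<Rightarrow> bool" where
  "curve_zeta_data q g P \<longleftrightarrow>
     (\<exists>p k. prime p \<and> k > 0 \<and> q = p ^ k) \<and>
     degree P = 2 * g \<and> coeff P 0 = 1 \<and>
     (\<forall>T::complex. T \<noteq> 0 \<longrightarrow>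
        poly (map_poly of_int P) T = of_nat q ^ g * T ^ (2 * g) * poly (map_poly of_int P) (1 / (of_nat q * T))) \<and>
     (\<forall>\<alpha>::complex. poly (map_poly of_int P) \<alpha> = 0 \<longrightarrow> norm \<alpha> = 1 / sqrt (real q))"

text \<open>Complete Artin zeta function as a function of T = q^(-s):
  hat Z_X(T) = T^(-(g-1)) Z_X(T), since q^(s(g-1)) = T^(-(g-1)).\<close>

definition complete_Z :: "nat \<Rightarrow> nat \<Rightarrow> int poly \<Rightarrow> complex \<Rightarrow> complex" where
  "complete_Z q g P T =
     T powi (1 - int g) * poly (map_poly of_int P) T / ((1 - T) * (1 - of_nat q * T))"

definition compositions :: "nat \<Rightarrow> nat list set" where
  "compositions N = {ks. (\<forall>k\<in>set ks. 0 < k) \<and> sum_list ks = N}"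

text \<open>Special values of the previous zeta function F (a function of T' = Q^(-s)):
  zhat(1) = Res_{T'=1} F, zhat(k) = F(Q^(-k)) for k >= 2; and v_N = prod_{k=1}^N zhat(k).\<close>

definition zeta_val :: "complex \<Rightarrow> (complex \<Rightarrow> complex) \<Rightarrow> nat \<Rightarrow> complex" where
  "zeta_val Q F k = (if k = 1 then residue F 1 else F (Q powi (- int k)))"

definition vhat :: "complex \<Rightarrow> (complex \<Rightarrow> complex) \<Rightarrow> nat \<Rightarrow> complex" where
  "vhat Q F N = (\<Prod>k=1..N. zeta_val Q F k)"

definition chain :: "complex \<Rightarrow> (complex \<Rightarrow> complex) \<Rightarrow> nat list \<Rightarrow> complex" where
  "chain Q F ks = (\<Prod>i<length ks. vhat Q F (ks ! i)) /
      (\<Prod>j<length ks - 1. (1 - Q ^ (ks ! j + ks ! (j + 1))))"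

text \<open>Left and right brackets in the recursion, written in the variable T = T_{n_m}
  (so Q^(n s) = 1/T where Q = q_{n_{m-1}}, n = n_m).\<close>

definition left_bracket ::
  "complex \<Rightarrow> (complex \<Rightarrow> complex) \<Rightarrow> nat \<Rightarrow> nat \<Rightarrow> complex \<Rightarrow> complex" where
  "left_bracket Q F n a T =
     (if n - a = 0 then 1 else
       (\<Sum>ks\<in>compositions (n - a).
          chain Q F ks * (1 / (1 - Q powi (- int n + int a + int (last ks)) / T))))"

definition right_bracket ::
  "complex \<Rightarrow> (complex \<Rightarrow> complex) \<Rightarrow> nat \<Rightarrow> nat \<Rightarrow> complex \<Rightarrow> complex" where
  "right_bracket Q F n a T =
     (if a - 1 = 0 then 1 else
       (\<Sum>ls\<in>compositions (a - 1).
          (1 / (1 - T * Q powi (int n - int a + 1 + int (hd ls)))) * chain Q F ls))"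

text \<open>One derivation step: Q = q_{n_{m-1}}, F = hat Z^{(n_{m-1})}, n = n_m.
  zeta^{(n_{m-1})}(n s - n + a) = F(Q^(n - a) * T) with T = Q^(-n s) = T_{n_m}.\<close>

definition derive_step ::
  "int \<Rightarrow> complex \<Rightarrow> nat \<Rightarrow> (complex \<Rightarrow> complex) \<Rightarrow> complex \<Rightarrow> complex" where
  "derive_step gm1 Q n F T =
     Q powi (int (n choose 2) * gm1) *
     (\<Sum>a=1..n. left_bracket Q F n a T * F (Q powi (int n - int a) * T) * right_bracket Q F n a T)"

text \<open>Derived zeta functions, indexed by the reversed tuple (last entry first).\<close>

fun derived_Z_rev :: "nat \<Rightarrow> nat \<Rightarrow> int poly \<Rightarrow> nat list \<Rightarrow> complex \<Rightarrow> complex" where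
  "derived_Z_rev q g P [] = complete_Z q g P"
| "derived_Z_rev q g P (n # ns) =
     derive_step (int g - 1) (of_nat q ^ prod_list ns) n (derived_Z_rev q g P ns)"

definition derived_Z :: "nat \<Rightarrow> nat \<Rightarrow> int poly \<Rightarrow> nat list \<Rightarrow> complex \<Rightarrow> complex" where
  "derived_Z q g P ns = derived_Z_rev q g P (rev ns)"

end

theory Submission
  imports Defs
begin

text \<open>Functions that agree with a quotient of polynomials outside a finite set are closed
  under the field operations and under rescaling of the variable.  Each derived zeta function
  is obtained from the previous one by finitely many such operations, with the special values
  (residues and values at powers of Q) entering only as constants; so rationality propagates
  along the tuple, starting from the complete Artin zeta function.  The arithmetic of the curve
  (the Weil properties of P) and the positivity of the entries of the tuple play no role.\<close>

text \<open>Equality is only required outside a finite set: at a pole, a HOL function built with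
  division takes a junk value (x / 0 = 0) that need not match the quotient.\<close>

definition rational_fun :: "('a::field \<Rightarrow> 'a) \<Rightarrow> bool" where
  "rational_fun f \<longleftrightarrow>
     (\<exists>A B. B \<noteq> 0 \<and> (\<forall>\<^sub>F T in cofinite. f T = poly A T / poly B T))"

lemma eventually_poly_nonzero_cofinite:
  fixes p :: "'a::idom poly"
  assumes "p \<noteq> 0"
  shows "\<forall>\<^sub>F x in cofinite. poly p x \<noteq> 0"
  using poly_roots_finite[OF assms] by (simp add: eventually_cofinite)

lemma rational_fun_poly: "rational_fun (\<lambda>T. poly p T)"
  unfolding rational_fun_def by (intro exI[of _ p] exI[of _ 1]) simp

lemma rational_fun_const: "rational_fun (\<lambda>T. c)"
  using rational_fun_poly[of "[:c:]"] by simp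

lemma rational_fun_ident: "rational_fun (\<lambda>T. T)"
  using rational_fun_poly[of "[:0, 1:]"] by simp

lemma rational_fun_power: "rational_fun (\<lambda>T. T ^ k)"
  using rational_fun_poly[of "monom 1 k"] by (simp add: poly_monom)

lemma rational_fun_mult:
  assumes "rational_fun f" "rational_fun g"
  shows "rational_fun (\<lambda>T. f T * g T)"
proof -
  obtain A B where "B \<noteq> 0" and f: "\<forall>\<^sub>F T in cofinite. f T = poly A T / poly B T"
    using assms(1) unfolding rational_fun_def by blast
  moreover obtain C D where "D \<noteq> 0" and g: "\<forall>\<^sub>F T in cofinite. g T = poly C T / poly D T"
    using assms(2) unfolding rational_fun_def by blast
  moreover have "\<forall>\<^sub>F T in cofinite. f T * g T = poly (A * C) T / poly (B * D) T"
    using f g by eventually_elim simp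
  ultimately show ?thesis
    unfolding rational_fun_def by (metis mult_eq_0_iff)
qed

lemma rational_fun_add:
  assumes "rational_fun f" "rational_fun g"
  shows "rational_fun (\<lambda>T. f T + g T)"
proof -
  obtain A B where B: "B \<noteq> 0" and f: "\<forall>\<^sub>F T in cofinite. f T = poly A T / poly B T"
    using assms(1) unfolding rational_fun_def by blast
  obtain C D where D: "D \<noteq> 0" and g: "\<forall>\<^sub>F T in cofinite. g T = poly C T / poly D T"
    using assms(2) unfolding rational_fun_def by blast
  have "\<forall>\<^sub>F T in cofinite. f T + g T = poly (A * D + C * B) T / poly (B * D) T"
    using f g eventually_poly_nonzero_cofinite[OF B] eventually_poly_nonzero_cofinite[OF D]
    by eventually_elim (simp add: field_simps)
  moreover have "B * D \<noteq> 0"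
    using B D by simp
  ultimately show ?thesis
    unfolding rational_fun_def by blast
qed

lemma rational_fun_diff:
  assumes "rational_fun f" "rational_fun g"
  shows "rational_fun (\<lambda>T. f T - g T)"
  using rational_fun_add[OF assms(1) rational_fun_mult[OF rational_fun_const[of "-1"] assms(2)]]
  by simp

lemma rational_fun_divide:
  assumes "rational_fun f" "rational_fun g"
  shows "rational_fun (\<lambda>T. f T / g T)"
proof -
  obtain A B where B: "B \<noteq> 0" and f: "\<forall>\<^sub>F T in cofinite. f T = poly A T / poly B T"
    using assms(1) unfolding rational_fun_def by blast
  obtain C D where "D \<noteq> 0" and g: "\<forall>\<^sub>F T in cofinite. g T = poly C T / poly D T"
    using assms(2) unfolding rational_fun_def by blast
  show ?thesis
  proof (cases "C = 0")
    case True
    have "\<forall>\<^sub>F T in cofinite. f T / g T = poly 0 T / poly 1 T"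
      using g by eventually_elim (simp add: True)
    then show ?thesis
      unfolding rational_fun_def by (metis one_neq_zero)
  next
    case False
    have "\<forall>\<^sub>F T in cofinite. f T / g T = poly (A * D) T / poly (B * C) T"
      using f g by eventually_elim (simp add: divide_divide_times_eq)
    moreover have "B * C \<noteq> 0"
      using B False by simp
    ultimately show ?thesis
      unfolding rational_fun_def by blast
  qed
qed

lemma rational_fun_sum:
  assumes "\<And>x. x \<in> S \<Longrightarrow> rational_fun (f x)"
  shows "rational_fun (\<lambda>T. \<Sum>x\<in>S. f x T)"
proof (cases "finite S")
  case True
  then show ?thesis
    using assms by (induction S rule: finite_induct) (auto intro: rational_fun_add rational_fun_const)
qed (simp add: rational_fun_const)

lemma rational_fun_power_int: "rational_fun (\<lambda>T. T powi k)"
proof (cases "k \<ge> 0")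
  case True
  then show ?thesis
    using rational_fun_power[of "nat k"] by (simp add: power_int_def)
next
  case False
  then show ?thesis
    using rational_fun_divide[OF rational_fun_const[of 1] rational_fun_power[of "nat (- k)"]]
    by (simp add: power_int_def field_simps)
qed

lemma rational_fun_compose_scale:
  assumes "rational_fun f"
  shows "rational_fun (\<lambda>T. f (c * T))"
proof (cases "c = 0")
  case True
  then show ?thesis
    by (simp add: rational_fun_const)
next
  case False
  obtain A B where B: "B \<noteq> 0" and f: "\<forall>\<^sub>F T in cofinite. f T = poly A T / poly B T"
    using assms unfolding rational_fun_def by blast
  let ?scale = "\<lambda>p. pcompose p [:0, c:]"
  have "{T. f (c * T) \<noteq> poly (?scale A) T / poly (?scale B) T}
        = (\<lambda>T. c * T) -` {T. f T \<noteq> poly A T / poly B T}"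
    by (auto simp: poly_pcompose algebra_simps)
  moreover have "inj (\<lambda>T. c * T)"
    using False by (auto intro: injI)
  ultimately have "\<forall>\<^sub>F T in cofinite. f (c * T) = poly (?scale A) T / poly (?scale B) T"
    using f unfolding eventually_cofinite by (metis finite_vimageI)
  moreover have "?scale B \<noteq> 0"
    using B False pcompose_eq_0[of B "[:0, c:]"] by auto
  ultimately show ?thesis
    unfolding rational_fun_def by blast
qed

lemma rational_fun_left_bracket: "rational_fun (left_bracket Q F n a)"
  unfolding left_bracket_def
  by (cases "n - a = 0") (auto intro!: rational_fun_const rational_fun_sum rational_fun_mult rational_fun_divide
      rational_fun_diff rational_fun_ident)

lemma rational_fun_right_bracket: "rational_fun (right_bracket Q F n a)"
  unfolding right_bracket_def
  by (cases "a - 1 = 0") (auto intro!: rational_fun_const rational_fun_sum rational_fun_mult rational_fun_divide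
      rational_fun_diff rational_fun_ident)

lemma rational_fun_derive_step:
  assumes "rational_fun F"
  shows "rational_fun (derive_step gm1 Q n F)"
proof -
  have "rational_fun (\<lambda>T. derive_step gm1 Q n F T)"
    unfolding derive_step_def
    by (intro rational_fun_mult rational_fun_const rational_fun_sum rational_fun_compose_scale
        assms rational_fun_left_bracket rational_fun_right_bracket)
  then show ?thesis
    by simp
qed

lemma rational_fun_complete_Z: "rational_fun (complete_Z q g P)"
proof -
  have "rational_fun (\<lambda>T. complete_Z q g P T)"
    unfolding complete_Z_def
    by (intro rational_fun_mult rational_fun_divide rational_fun_diff rational_fun_const
        rational_fun_ident rational_fun_power_int rational_fun_poly)
  then show ?thesis
    by simp
qed

lemma rational_fun_derived_Z_rev: "rational_fun (derived_Z_rev q g P ns)"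
  by (induction ns) (auto intro: rational_fun_derive_step rational_fun_complete_Z)

theorem theorem2p1:
  fixes q g :: nat and P :: "int poly" and ns :: "nat list"
  assumes "curve_zeta_data q g P"
    and "ns \<noteq> []" and "\<forall>n\<in>set ns. 0 < n"
  shows "\<exists>A B :: complex poly. B \<noteq> 0 \<and>
           finite {T. derived_Z q g P ns T \<noteq> poly A T / poly B T}"
  using rational_fun_derived_Z_rev[of q g P "rev ns"]
  unfolding rational_fun_def derived_Z_def eventually_cofinite by simp

end
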